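(* Let $N$ be a positive integer divisible by $4$, let $h>0$ and $\sigma\ge 0$, and set $N_1=N$, $N_2=N/2$, $N_3=N/4$. Let $u_1,\dots,u_N$ be deterministic real numbers and let $\xi_1,\dots,\xi_N$ be independent real random variables with $\mathbb{E}(\xi_i)=0$ and $\mathbb{E}(\xi_i^2)=\frac{2\sigma^2}{Nh}$ for all $i$. Put $u_0(x_i)=u_i+\xi_i$ for $i=1,\dots,N$. Define $v^0_i=u_0(x_i)$ for $i=1,\dots,N_1$ and recursively $v^j_i=\frac{v^{j-1}_{2i}+v^{j-1}_{2i-1}}{2}$ for $i=1,\dots,N_{j+1}$, $j=1,2$. Define $$V_{j+1}=\sum_{i=1}^{N_{j+1}-1}|v^j_{i+1}-v^j_i|^2\cdot\frac{1}{2^j h},\qquad j=0,1,2,$$ and $$\hat\sigma^2=h^2\,\frac{\left(\frac{119}{16}-\frac{27}{4N}\right)V_1+\left(\frac{9}{4N}-\frac{49}{16}\right)V_2+\left(\frac{9}{2N}-\frac{35}{8}\right)V_3}{\frac{3577}{128}+\frac{189}{8N^2}-\frac{819}{16N}}.$$ Similarly define $u^{(0)}_i=u_i$ for $i=1,\dots,N_1$, $u^{(j)}_i=\frac{u^{(j-1)}_{2i-1}+u^{(j-1)}_{2i}}{2}$ for $i=1,\dots,N_{j+1}$, $j=1,2$, and $$V^c_{j+1}=\sum_{i=1}^{N_{j+1}-1}\frac{|u^{(j)}_{i+1}-u^{(j)}_i|^2}{2^{j}h},\qquad j=0,1,2.$$ Then $\hat\sigma^2$ is an estimate of $\sigma^2$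 whose bias is $$\mathbb{E}(\hat\sigma^2)-\sigma^2=h^2\,\frac{\left(\frac{49}{16}-\frac{9}{4N}\right)(V^c_1-V^c_2)+\left(\frac{35}{8}-\frac{9}{2N}\right)(V^c_1-V^c_3)}{\frac{3577}{128}+\frac{189}{8N^2}-\frac{819}{16N}}.$$
   Context: Here $u_0(x_i)$ models an observed (noisy) traffic velocity in the $i$-th time slice of length $h$, $u_i$ the clean velocity and $\xi_i$ the noise; $\sigma$ is the noise-strength parameter. The quantities $V_1,V_2,V_3$ are discrete squared variations of the observed data at three resolutions obtained by successive pairwise averaging, and $V^c_1,V^c_2,V^c_3$ are the analogous quantities for the clean data. *)

theory Defs
  imports "HOL-Probability.Probability"
begin

fun avg_level :: "nat \<Rightarrow> (nat \<Rightarrow> real) \<Rightarrow> nat \<Rightarrow> real" where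
  "avg_level 0 f i = f i"
| "avg_level (Suc j) f i = (avg_level j f (2*i) + avg_level j f (2*i - 1)) / 2"

text \<open>Discrete squared variation at resolution j (j = 0,1,2 give V_1,V_2,V_3):
  sum over i = 1 .. N/2^j - 1 of |w_{i+1} - w_i|^2 / (2^j h).\<close>
definition sq_var :: "nat \<Rightarrow> real \<Rightarrow> nat \<Rightarrow> (nat \<Rightarrow> real) \<Rightarrow> real" where
  "sq_var N h j f =
     (\<Sum>i\<in>{1..<N div 2^j}. \<bar>avg_level j f (i+1) - avg_level j f i\<bar>^2 / (2^j * h))"

definition sigma_denom :: "nat \<Rightarrow> real" where
  "sigma_denom N = 3577/128 + 189/(8 * real N^2) - 819/(16 * real N)"

definition sigma_hat_sq :: "nat \<Rightarrow> real \<Rightarrow> (nat \<Rightarrow> real) \<Rightarrow> real" where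
  "sigma_hat_sq N h f = h^2 *
     ((119/16 - 27/(4 * real N)) * sq_var N h 0 f
      + (9/(4 * real N) - 49/16) * sq_var N h 1 f
      + (9/(2 * real N) - 35/8) * sq_var N h 2 f) / sigma_denom N"

end

theory Submission
  imports Defs
begin

(* Each difference of consecutive level-j averages is a combination of 2^(j+1) consecutive
   observations with weights +-2^-j.  For centred, pairwise uncorrelated noise of second moment s the
   expected square of such a difference therefore exceeds the clean one by exactly 2 s / 2^j, so
   E V_(j+1) = V^c_(j+1) + b_j with a bias b_j depending only on N, h, s and j.  The estimator is
   linear in (V_1, V_2, V_3); its weights sum to zero, which turns its clean part into the stated
   combination of differences, and they are tuned so that the biases b_j add up to exactly sigma^2.
   Thus the bias of the estimator is the estimator applied to the clean data. *)

lemma sum_greaterThanAtMost_split: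
  assumes "l \<le> m" "m \<le> (u::nat)"
  shows "sum f {l<..u} = sum f {l<..m} + sum f {m<..u}"
proof -
  have "{l<..u} = {l<..m} \<union> {m<..u}"
    using assms by auto
  then show ?thesis
    by (simp add: sum.union_disjoint ivl_disj_int)
qed

lemma avg_level_Suc_eq_block_mean:
  "avg_level j f (Suc p) = (\<Sum>k\<in>{2^j*p<..2^j*Suc p}. f k) / 2^j"
proof (induction j arbitrary: p)
  case 0
  have "{p<..Suc p} = {Suc p}"
    by auto
  then show ?case
    by simp
next
  case (Suc j)
  have children: "2 * Suc p = Suc (Suc (2*p))" "Suc (Suc (2*p)) - 1 = Suc (2*p)"
    by simp_all
  have ends: "2^Suc j*p = 2^j*(2*p)" "2^Suc j*Suc p = 2^j*Suc (Suc (2*p))"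
    by simp_all
  have le: "2^j*(2*p) \<le> 2^j*Suc (2*p)" "2^j*Suc (2*p) \<le> 2^j*Suc (Suc (2*p))"
    by simp_all
  have "avg_level (Suc j) f (Suc p) = (avg_level j f (Suc (Suc (2*p))) + avg_level j f (Suc (2*p))) / 2"
    by (simp only: avg_level.simps children)
  also have "\<dots> = ((\<Sum>k\<in>{2^j*Suc (2*p)<..2^j*Suc (Suc (2*p))}. f k)
                     + (\<Sum>k\<in>{2^j*(2*p)<..2^j*Suc (2*p)}. f k)) / 2^Suc j"
    by (simp only: Suc.IH) (simp add: field_simps)
  also have "\<dots> = (\<Sum>k\<in>{2^Suc j*p<..2^Suc j*Suc p}. f k) / 2^Suc j"
    by (simp only: ends sum_greaterThanAtMost_split[OF le, of f] add.commute)
  finally show ?case .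
qed

definition haar_weight :: "nat \<Rightarrow> nat \<Rightarrow> nat \<Rightarrow> real" where
  "haar_weight j p k = (if k \<le> 2^j * Suc p then -1 else 1) / 2^j"

lemma avg_level_diff_eq_haar_sum:
  "avg_level j f (Suc (Suc p)) - avg_level j f (Suc p) =
     (\<Sum>k\<in>{2^j*p<..2^j*Suc (Suc p)}. haar_weight j p k * f k)"
proof -
  let ?L = "{2^j*p<..2^j*Suc p}" and ?R = "{2^j*Suc p<..2^j*Suc (Suc p)}"
  have left: "(\<Sum>k\<in>?L. haar_weight j p k * f k) = - (\<Sum>k\<in>?L. f k) / 2^j"
    by (simp add: haar_weight_def sum_negf sum_divide_distrib)
  have right: "(\<Sum>k\<in>?R. haar_weight j p k * f k) = (\<Sum>k\<in>?R. f k) / 2^j"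
    by (simp add: haar_weight_def sum_divide_distrib)
  have le: "2^j*p \<le> 2^j*Suc p" "2^j*Suc p \<le> 2^j*Suc (Suc p)"
    by simp_all
  have "avg_level j f (Suc (Suc p)) - avg_level j f (Suc p) =
      (\<Sum>k\<in>?L. haar_weight j p k * f k) + (\<Sum>k\<in>?R. haar_weight j p k * f k)"
    unfolding left right avg_level_Suc_eq_block_mean by (simp add: diff_divide_distrib)
  also have "\<dots> = (\<Sum>k\<in>{2^j*p<..2^j*Suc (Suc p)}. haar_weight j p k * f k)"
    by (rule sum_greaterThanAtMost_split[OF le, symmetric])
  finally show ?thesis .
qed

lemma sum_haar_weight_sq:
  "(\<Sum>k\<in>{2^j*p<..2^j*Suc (Suc p)}. (haar_weight j p k)^2) = 2 / 2^j"
proof -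
  have "(haar_weight j p k)^2 = 1 / (2^j)^2" for k
    by (simp add: haar_weight_def power_divide)
  then show ?thesis
    by (simp add: power2_eq_square)
qed

definition sq_var_noise_bias :: "nat \<Rightarrow> real \<Rightarrow> real \<Rightarrow> nat \<Rightarrow> real" where
  "sq_var_noise_bias N h s j = real (N div 2^j - 1) * (2 * s / 2^j / (2^j * h))"

definition sigma_hat_of_vars :: "nat \<Rightarrow> real \<Rightarrow> real \<Rightarrow> real \<Rightarrow> real \<Rightarrow> real" where
  "sigma_hat_of_vars N h V1 V2 V3 = h^2 *
     ((119/16 - 27/(4 * real N)) * V1 + (9/(4 * real N) - 49/16) * V2 + (9/(2 * real N) - 35/8) * V3)
     / sigma_denom N"

lemma sigma_hat_sq_eq_of_vars:
  "sigma_hat_sq N h f = sigma_hat_of_vars N h (sq_var N h 0 f) (sq_var N h 1 f) (sq_var N h 2 f)"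
  by (simp add: sigma_hat_sq_def sigma_hat_of_vars_def)

lemma sigma_hat_of_vars_add:
  "sigma_hat_of_vars N h (V1 + W1) (V2 + W2) (V3 + W3) =
     sigma_hat_of_vars N h V1 V2 V3 + sigma_hat_of_vars N h W1 W2 W3"
  unfolding sigma_hat_of_vars_def divide_inverse by algebra

lemma has_bochner_integral_sigma_hat_of_vars:
  assumes "has_bochner_integral M X1 V1" "has_bochner_integral M X2 V2" "has_bochner_integral M X3 V3"
  shows "has_bochner_integral M (\<lambda>\<omega>. sigma_hat_of_vars N h (X1 \<omega>) (X2 \<omega>) (X3 \<omega>))
    (sigma_hat_of_vars N h V1 V2 V3)"
  unfolding sigma_hat_of_vars_def
  by (intro has_bochner_integral_divide_zero has_bochner_integral_mult_right has_bochner_integral_add assms)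

lemma sigma_hat_sq_eq_differences:
  "sigma_hat_sq N h f =
    h^2 * ((49/16 - 9/(4 * real N)) * (sq_var N h 0 f - sq_var N h 1 f)
           + (35/8 - 9/(2 * real N)) * (sq_var N h 0 f - sq_var N h 2 f)) / sigma_denom N"
  unfolding sigma_hat_sq_def divide_inverse inverse_mult_distrib by algebra

lemma sigma_denom_pos:
  assumes "N > 0"
  shows "sigma_denom N > 0"
proof -
  have "sigma_denom N = (3577 * real N^2 - 6552 * real N + 3024) / (128 * real N^2)"
    using assms by (simp add: sigma_denom_def field_simps power2_eq_square)
  moreover have "3577 * x^2 - 6552 * x + 3024 = 3577 * (x - 3276/3577)^2 + 84672/3577" for x :: real
    by (simp add: power2_eq_square field_simps)
  ultimately show ?thesis
    using assms by (simp add: add_pos_nonneg)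
qed

lemma sigma_hat_of_vars_noise_bias:
  assumes "4 dvd N" "N > 0" "h > 0"
  shows "sigma_hat_of_vars N h (sq_var_noise_bias N h s 0) (sq_var_noise_bias N h s 1) (sq_var_noise_bias N h s 2)
    = real N * h * s / 2"
proof -
  obtain m where N: "N = 4 * m" and "m \<ge> 1"
    using assms(1,2) by auto
  then have bias: "sq_var_noise_bias N h s 0 = (4 * real m - 1) * (2 * s / h)"
    "sq_var_noise_bias N h s 1 = (2 * real m - 1) * (s / (2 * h))"
    "sq_var_noise_bias N h s 2 = (real m - 1) * (s / (8 * h))"
    by (simp_all add: sq_var_noise_bias_def of_nat_diff)
  have "h^2 * ((119/16 - 27/(4 * real N)) * sq_var_noise_bias N h s 0
      + (9/(4 * real N) - 49/16) * sq_var_noise_bias N h s 1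
      + (9/(2 * real N) - 35/8) * sq_var_noise_bias N h s 2)
      = real N * h * s / 2 * sigma_denom N"
    unfolding bias using assms(3) \<open>m \<ge> 1\<close>
    by (simp add: N sigma_denom_def field_simps power2_eq_square)
  moreover have "sigma_denom N \<noteq> 0"
    using sigma_denom_pos[OF assms(2)] by simp
  ultimately show ?thesis
    unfolding sigma_hat_of_vars_def by simp
qed

lemma (in prob_space) has_bochner_integral_const: "has_bochner_integral M (\<lambda>_. c) (c::real)"
  using prob_space by (simp add: has_bochner_integral_iff)

locale indep_noise = prob_space M for M :: "'a measure" +
  fixes \<xi> :: "nat \<Rightarrow> 'a \<Rightarrow> real" and I :: "nat set" and s :: real
  assumes indep: "indep_vars (\<lambda>_. borel) \<xi> I"
    and integrable_noise: "\<And>i. i \<in> I \<Longrightarrow> integrable M (\<xi> i)"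
    and expectation_noise: "\<And>i. i \<in> I \<Longrightarrow> expectation (\<xi> i) = 0"
    and integrable_noise_sq: "\<And>i. i \<in> I \<Longrightarrow> integrable M (\<lambda>\<omega>. (\<xi> i \<omega>)^2)"
    and expectation_noise_sq: "\<And>i. i \<in> I \<Longrightarrow> expectation (\<lambda>\<omega>. (\<xi> i \<omega>)^2) = s"
begin

lemma has_bochner_integral_noise: "i \<in> I \<Longrightarrow> has_bochner_integral M (\<xi> i) 0"
  by (simp add: has_bochner_integral_iff integrable_noise expectation_noise)

lemma has_bochner_integral_noise_mult:
  assumes "k \<in> I" "l \<in> I"
  shows "has_bochner_integral M (\<lambda>\<omega>. \<xi> k \<omega> * \<xi> l \<omega>) (if k = l then s else 0)"
proof (cases "k = l")
  case True
  then show ?thesis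
    using assms integrable_noise_sq expectation_noise_sq
    by (simp add: has_bochner_integral_iff power2_eq_square)
next
  case False
  have indep_kl: "indep_vars (\<lambda>_. borel) \<xi> {k, l}"
    by (rule indep_vars_subset[OF indep]) (use assms in auto)
  have prod_kl: "(\<lambda>\<omega>. \<Prod>i\<in>{k, l}. \<xi> i \<omega>) = (\<lambda>\<omega>. \<xi> k \<omega> * \<xi> l \<omega>)"
    using False by simp
  have "integrable M (\<lambda>\<omega>. \<Prod>i\<in>{k, l}. \<xi> i \<omega>)"
    by (rule indep_vars_integrable) (use indep_kl assms integrable_noise in auto)
  moreover have "expectation (\<lambda>\<omega>. \<Prod>i\<in>{k, l}. \<xi> i \<omega>) = (\<Prod>i\<in>{k, l}. expectation (\<xi> i))"
    by (rule indep_vars_lebesgue_integral) (use indep_kl assms integrable_noise in auto)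
  ultimately show ?thesis
    using False assms expectation_noise by (simp add: has_bochner_integral_iff prod_kl)
qed

lemma has_bochner_integral_noise_comb:
  assumes "finite K" "K \<subseteq> I"
  shows "has_bochner_integral M (\<lambda>\<omega>. \<Sum>k\<in>K. c k * \<xi> k \<omega>) 0"
proof -
  have "has_bochner_integral M (\<lambda>\<omega>. \<Sum>k\<in>K. c k * \<xi> k \<omega>) (\<Sum>k\<in>K. c k * 0)"
    using assms by (intro has_bochner_integral_sum has_bochner_integral_mult_right has_bochner_integral_noise) auto
  then show ?thesis
    by simp
qed

lemma has_bochner_integral_noise_comb_sq:
  assumes "finite K" "K \<subseteq> I"
  shows "has_bochner_integral M (\<lambda>\<omega>. (\<Sum>k\<in>K. c k * \<xi> k \<omega>)^2) (s * (\<Sum>k\<in>K. (c k)^2))"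
proof -
  have "has_bochner_integral M (\<lambda>\<omega>. \<Sum>k\<in>K. \<Sum>l\<in>K. c k * c l * (\<xi> k \<omega> * \<xi> l \<omega>))
      (\<Sum>k\<in>K. \<Sum>l\<in>K. c k * c l * (if k = l then s else 0))"
    using assms by (intro has_bochner_integral_sum has_bochner_integral_mult_right has_bochner_integral_noise_mult) auto
  moreover have "(\<Sum>k\<in>K. \<Sum>l\<in>K. c k * c l * (if k = l then s else 0)) = s * (\<Sum>k\<in>K. (c k)^2)"
    using assms(1) by (simp add: if_distrib sum_distrib_left power2_eq_square mult_ac cong: if_cong)
  moreover have "(\<Sum>k\<in>K. c k * \<xi> k \<omega>)^2
      = (\<Sum>k\<in>K. \<Sum>l\<in>K. c k * c l * (\<xi> k \<omega> * \<xi> l \<omega>))" for \<omega>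
    by (simp add: power2_eq_square sum_product mult_ac)
  ultimately show ?thesis
    by simp
qed

lemma has_bochner_integral_shifted_noise_comb_sq:
  assumes "finite K" "K \<subseteq> I"
  shows "has_bochner_integral M (\<lambda>\<omega>. (d + (\<Sum>k\<in>K. c k * \<xi> k \<omega>))^2) (d^2 + s * (\<Sum>k\<in>K. (c k)^2))"
proof -
  have "has_bochner_integral M
      (\<lambda>\<omega>. d^2 + 2 * d * (\<Sum>k\<in>K. c k * \<xi> k \<omega>) + (\<Sum>k\<in>K. c k * \<xi> k \<omega>)^2)
      (d^2 + 2 * d * 0 + s * (\<Sum>k\<in>K. (c k)^2))"
    using assms has_bochner_integral_const has_bochner_integral_noise_comb has_bochner_integral_noise_comb_sq
    by (intro has_bochner_integral_add has_bochner_integral_mult_right) auto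
  moreover have "(d + (\<Sum>k\<in>K. c k * \<xi> k \<omega>))^2
      = d^2 + 2 * d * (\<Sum>k\<in>K. c k * \<xi> k \<omega>) + (\<Sum>k\<in>K. c k * \<xi> k \<omega>)^2" for \<omega>
    by (simp add: power2_eq_square algebra_simps)
  ultimately show ?thesis
    by simp
qed

lemma has_bochner_integral_sq_diff_avg_level:
  assumes "{1..N} \<subseteq> I" "Suc (Suc p) \<le> N div 2^j"
  shows "has_bochner_integral M
    (\<lambda>\<omega>. (avg_level j (\<lambda>i. u i + \<xi> i \<omega>) (Suc (Suc p))
          - avg_level j (\<lambda>i. u i + \<xi> i \<omega>) (Suc p))^2)
    ((avg_level j u (Suc (Suc p)) - avg_level j u (Suc p))^2 + 2 * s / 2^j)"
proof -
  let ?K = "{2^j*p<..2^j*Suc (Suc p)}"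
  have "2^j * Suc (Suc p) \<le> 2^j * (N div 2^j)"
    using assms(2) by (rule mult_le_mono2)
  also have "\<dots> \<le> N"
    by simp
  finally have "?K \<subseteq> I"
    using assms(1) by auto
  from has_bochner_integral_shifted_noise_comb_sq[OF finite_greaterThanAtMost this, where c = "haar_weight j p"]
  have "has_bochner_integral M
      (\<lambda>\<omega>. ((\<Sum>k\<in>?K. haar_weight j p k * u k) + (\<Sum>k\<in>?K. haar_weight j p k * \<xi> k \<omega>))^2)
      ((\<Sum>k\<in>?K. haar_weight j p k * u k)^2 + s * (2 / 2^j))"
    unfolding sum_haar_weight_sq .
  then show ?thesis
    by (simp add: avg_level_diff_eq_haar_sum distrib_left sum.distrib mult.commute)
qed

lemma has_bochner_integral_sq_var:
  assumes "{1..N} \<subseteq> I"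
  shows "has_bochner_integral M (\<lambda>\<omega>. sq_var N h j (\<lambda>i. u i + \<xi> i \<omega>))
    (sq_var N h j u + sq_var_noise_bias N h s j)"
proof -
  have "has_bochner_integral M
      (\<lambda>\<omega>. \<bar>avg_level j (\<lambda>i. u i + \<xi> i \<omega>) (i+1)
            - avg_level j (\<lambda>i. u i + \<xi> i \<omega>) i\<bar>^2 / (2^j * h))
      ((\<bar>avg_level j u (i+1) - avg_level j u i\<bar>^2 + 2 * s / 2^j) / (2^j * h))"
    if i: "i \<in> {1..<N div 2^j}" for i
  proof -
    obtain p where "i = Suc p"
      using i by (cases i) auto
    then show ?thesis
      using i assms has_bochner_integral_sq_diff_avg_level[of N p j u] by auto
  qed
  then have "has_bochner_integral M (\<lambda>\<omega>. sq_var N h j (\<lambda>i. u i + \<xi> i \<omega>))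
      (\<Sum>i\<in>{1..<N div 2^j}. (\<bar>avg_level j u (i+1) - avg_level j u i\<bar>^2 + 2 * s / 2^j) / (2^j * h))"
    unfolding sq_var_def by (rule has_bochner_integral_sum)
  then show ?thesis
    by (simp add: sq_var_def sq_var_noise_bias_def add_divide_distrib sum.distrib)
qed

lemma has_bochner_integral_sigma_hat_sq:
  assumes "{1..N} \<subseteq> I"
  shows "has_bochner_integral M (\<lambda>\<omega>. sigma_hat_sq N h (\<lambda>i. u i + \<xi> i \<omega>))
    (sigma_hat_sq N h u
     + sigma_hat_of_vars N h (sq_var_noise_bias N h s 0) (sq_var_noise_bias N h s 1) (sq_var_noise_bias N h s 2))"
  unfolding sigma_hat_sq_eq_of_vars sigma_hat_of_vars_add[symmetric]
  by (intro has_bochner_integral_sigma_hat_of_vars has_bochner_integral_sq_var assms)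

end

theorem theorem2p1:
  fixes M :: "'a measure" and N :: nat and h \<sigma> :: real
    and u :: "nat \<Rightarrow> real" and \<xi> :: "nat \<Rightarrow> 'a \<Rightarrow> real"
  assumes "prob_space M"
    and "N > 0" and "4 dvd N" and "h > 0" and "\<sigma> \<ge> 0"
    and "prob_space.indep_vars M (\<lambda>_. borel) \<xi> {1..N}"
    and "\<And>i. i \<in> {1..N} \<Longrightarrow> integrable M (\<xi> i)"
    and "\<And>i. i \<in> {1..N} \<Longrightarrow> prob_space.expectation M (\<xi> i) = 0"
    and "\<And>i. i \<in> {1..N} \<Longrightarrow> integrable M (\<lambda>\<omega>. (\<xi> i \<omega>)^2)"
    and "\<And>i. i \<in> {1..N} \<Longrightarrow>
           prob_space.expectation M (\<lambda>\<omega>. (\<xi> i \<omega>)^2) = 2 * \<sigma>^2 / (real N * h)"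
  shows "prob_space.expectation M (\<lambda>\<omega>. sigma_hat_sq N h (\<lambda>i. u i + \<xi> i \<omega>)) - \<sigma>^2 =
    h^2 * ((49/16 - 9/(4 * real N)) * (sq_var N h 0 u - sq_var N h 1 u)
           + (35/8 - 9/(2 * real N)) * (sq_var N h 0 u - sq_var N h 2 u)) / sigma_denom N"
proof -
  define s where "s = 2 * \<sigma>^2 / (real N * h)"
  interpret indep_noise M \<xi> "{1..N}" s
    by (intro indep_noise.intro indep_noise_axioms.intro) (use assms in \<open>simp_all add: s_def\<close>)
  have "sigma_hat_of_vars N h (sq_var_noise_bias N h s 0) (sq_var_noise_bias N h s 1) (sq_var_noise_bias N h s 2)
      = \<sigma>^2"
    using sigma_hat_of_vars_noise_bias[OF assms(3,2,4), of s] assms(2,4) by (simp add: s_def)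
  with has_bochner_integral_sigma_hat_sq[of N h u]
  have "has_bochner_integral M (\<lambda>\<omega>. sigma_hat_sq N h (\<lambda>i. u i + \<xi> i \<omega>)) (sigma_hat_sq N h u + \<sigma>^2)"
    by simp
  then show ?thesis
    using sigma_hat_sq_eq_differences[of N h u] by (simp add: has_bochner_integral_integral_eq)
qed

end
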